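(* For every map $M$, $V\cap F\subseteq Z$.
   Context: A map is a triple $M=(C_M,v_M,f_M)$ where $C_M$ is a finite cubic graph (multiple edges allowed) and $v_M,f_M$ are disjoint perfect matchings whose union is a disjoint union of 4-cycles, the squares of $M$ (set $SQ(M)$). $a_M=E(C_M)\setminus(v_M\cup f_M)$; $z_M$ is the perfect matching on $V(C_M)$ formed by the diagonals of the squares; $Q_M=C_M\cup z_M$. For a map $X$, $G_X$ has as vertices the cycles of $v_X\cup a_X$, as edges the squares of $X$, each square joining the cycles containing its two $v_X$-edges. The dual is $D=(C_M,f_M,v_M)$, the phial is $P=(Q_M\setminus v_M,z_M,f_M)$, and edge sets of $G_M,G_D,G_P$ are identified with $SQ(M)$. $V,F,Z$ are the coboundary (edge-cut) spaces over $GF(2)$ of $G_M,G_D,G_P$, viewed as sets of subsets of $SQ(M)$. *)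

theory Defs
  imports Main
begin

text \<open>A finite cubic multigraph: vertex set Vs, edge set Es (abstract edge names, so
parallel edges are allowed), each edge has a set of exactly two endpoints.\<close>
definition cubic_multigraph :: "'v set \<Rightarrow> 'e set \<Rightarrow> ('e \<Rightarrow> 'v set) \<Rightarrow> bool" where
  "cubic_multigraph Vs Es ends \<longleftrightarrow> finite Vs \<and> finite Es \<and>
     (\<forall>e\<in>Es. ends e \<subseteq> Vs \<and> card (ends e) = 2) \<and>
     (\<forall>x\<in>Vs. card {e\<in>Es. x \<in> ends e} = 3)"

definition perfect_matching :: "'v set \<Rightarrow> 'e set \<Rightarrow> ('e \<Rightarrow> 'v set) \<Rightarrow> 'e set \<Rightarrow> bool" where
  "perfect_matching Vs Es ends m \<longleftrightarrow> m \<subseteq> Es \<and> (\<forall>x\<in>Vs. card {e\<in>m. x \<in> ends e} = 1)"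

definition adj :: "('e \<Rightarrow> 'v set) \<Rightarrow> 'e set \<Rightarrow> 'v \<Rightarrow> 'v \<Rightarrow> bool" where
  "adj ends F x y \<longleftrightarrow> (\<exists>e\<in>F. ends e = {x, y})"

definition reach :: "('v \<Rightarrow> 'v \<Rightarrow> bool) \<Rightarrow> 'v \<Rightarrow> 'v set" where
  "reach R x = {y. R\<^sup>*\<^sup>* x y}"

definition comps :: "'v set \<Rightarrow> ('v \<Rightarrow> 'v \<Rightarrow> bool) \<Rightarrow> 'v set set" where
  "comps Vs R = {reach R x | x. x \<in> Vs}"

text \<open>A map (C_M, v_M, f_M): v, f disjoint perfect matchings of the cubic multigraph whose
union (a 2-regular spanning subgraph) is a disjoint union of 4-cycles, i.e. each of its
components has exactly 4 vertices.\<close>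
definition is_map :: "'v set \<Rightarrow> 'e set \<Rightarrow> ('e \<Rightarrow> 'v set) \<Rightarrow> 'e set \<Rightarrow> 'e set \<Rightarrow> bool" where
  "is_map Vs Es ends v f \<longleftrightarrow> cubic_multigraph Vs Es ends \<and>
     perfect_matching Vs Es ends v \<and> perfect_matching Vs Es ends f \<and> v \<inter> f = {} \<and>
     (\<forall>C\<in>comps Vs (adj ends (v \<union> f)). card C = 4)"

definition squares :: "'v set \<Rightarrow> ('e \<Rightarrow> 'v set) \<Rightarrow> 'e set \<Rightarrow> 'e set \<Rightarrow> 'v set set" where
  "squares Vs ends v f = comps Vs (adj ends (v \<union> f))"

definition a_edges :: "'e set \<Rightarrow> 'e set \<Rightarrow> 'e set \<Rightarrow> 'e set" where
  "a_edges Es v f = Es - (v \<union> f)"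

text \<open>z_M as an adjacency: x,y are the two ends of a diagonal of a square.\<close>
definition diag :: "'v set \<Rightarrow> ('e \<Rightarrow> 'v set) \<Rightarrow> 'e set \<Rightarrow> 'e set \<Rightarrow> 'v \<Rightarrow> 'v \<Rightarrow> bool" where
  "diag Vs ends v f x y \<longleftrightarrow> x \<noteq> y \<and> (\<exists>S\<in>squares Vs ends v f. x \<in> S \<and> y \<in> S) \<and>
     \<not> adj ends (v \<union> f) x y"

text \<open>Ends of a square S in G_X: the cycles (of the relation R) containing the edges of
the matching P (given as adjacency) lying in S.\<close>
definition square_ends :: "('v \<Rightarrow> 'v \<Rightarrow> bool) \<Rightarrow> ('v \<Rightarrow> 'v \<Rightarrow> bool) \<Rightarrow> 'v set \<Rightarrow> 'v set set" where
  "square_ends R P S = {reach R x | x. \<exists>y. P x y \<and> x \<in> S \<and> y \<in> S}"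

definition cut :: "'e set \<Rightarrow> ('e \<Rightarrow> 'w set) \<Rightarrow> 'w set \<Rightarrow> 'e set" where
  "cut Es endp X = {e\<in>Es. (\<exists>u\<in>endp e. u \<in> X) \<and> (\<exists>u\<in>endp e. u \<notin> X)}"

text \<open>Coboundary (edge-cut) space over GF(2), as a set of edge subsets.\<close>
definition cut_space :: "'w set \<Rightarrow> 'e set \<Rightarrow> ('e \<Rightarrow> 'w set) \<Rightarrow> 'e set set" where
  "cut_space W Es endp = {cut Es endp X | X. X \<subseteq> W}"

text \<open>Cut space of G_X, where the cycles of v_X \<union> a_X are the components of Rcyc and the
v_X-edges are given by the adjacency Pv; edge set is SQ(M).\<close>
definition G_cut_space ::
  "'v set \<Rightarrow> 'v set set \<Rightarrow> ('v \<Rightarrow> 'v \<Rightarrow> bool) \<Rightarrow> ('v \<Rightarrow> 'v \<Rightarrow> bool) \<Rightarrow> 'v set set set" where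
  "G_cut_space Vs SQ Rcyc Pv = cut_space (comps Vs Rcyc) SQ (square_ends Rcyc Pv)"

definition V_space :: "'v set \<Rightarrow> 'e set \<Rightarrow> ('e \<Rightarrow> 'v set) \<Rightarrow> 'e set \<Rightarrow> 'e set \<Rightarrow> 'v set set set" where
  "V_space Vs Es ends v f = G_cut_space Vs (squares Vs ends v f)
     (adj ends (v \<union> a_edges Es v f)) (adj ends v)"

definition F_space :: "'v set \<Rightarrow> 'e set \<Rightarrow> ('e \<Rightarrow> 'v set) \<Rightarrow> 'e set \<Rightarrow> 'e set \<Rightarrow> 'v set set set" where
  "F_space Vs Es ends v f = G_cut_space Vs (squares Vs ends v f)
     (adj ends (f \<union> a_edges Es v f)) (adj ends f)"

definition Z_space :: "'v set \<Rightarrow> 'e set \<Rightarrow> ('e \<Rightarrow> 'v set) \<Rightarrow> 'e set \<Rightarrow> 'e set \<Rightarrow> 'v set set set" where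
  "Z_space Vs Es ends v f = G_cut_space Vs (squares Vs ends v f)
     (\<lambda>x y. diag Vs ends v f x y \<or> adj ends (a_edges Es v f) x y) (diag Vs ends v f)"

end

theory Submission
  imports Defs
begin

(* Write T = \<delta>V(X) = \<delta>F(Y). The square {x, v x, f x, f (v x)} lies in T iff X separates
   the (v \<union> a)-cycles of x and f x, iff Y separates the (f \<union> a)-cycles of x and v x.
   Hence the parity g u = [V-cycle of u \<in> X] + [F-cycle of u \<in> Y] is unchanged along a-edges
   and along the diagonals x -- f (v x), i.e. it is constant on the cycles of z \<union> a.  For the
   set W of those cycles on which g is 1 we get \<delta>Z(W) = T, since v does not change the
   V-cycle and so g x + g (v x) = [the square of x lies in T]. *)

lemma symp_adj: "symp (adj ends F)"
  by (auto simp: adj_def insert_commute intro: sympI)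

lemma adj_Un: "adj ends (A \<union> B) x y \<longleftrightarrow> adj ends A x y \<or> adj ends B x y"
  by (auto simp: adj_def)

lemma reach_eq_if_rtranclp:
  assumes "symp R" "R\<^sup>*\<^sup>* x y"
  shows "reach R x = reach R y"
  using assms equivp_rtranclp[OF assms(1)] unfolding reach_def equivp_def by metis

lemma reach_eq_if_step: "symp R \<Longrightarrow> R x y \<Longrightarrow> reach R x = reach R y"
  by (simp add: reach_eq_if_rtranclp r_into_rtranclp)

lemma comps_subset_of_invariant:
  assumes step: "\<And>a b. a \<in> Vs \<Longrightarrow> R a b \<Longrightarrow> b \<in> Vs \<and> (g a \<longleftrightarrow> g b)"
  obtains W where "W \<subseteq> comps Vs R" "\<And>u. u \<in> Vs \<Longrightarrow> reach R u \<in> W \<longleftrightarrow> g u"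
proof
  let ?W = "{reach R u | u. u \<in> Vs \<and> g u}"
  show "?W \<subseteq> comps Vs R" unfolding comps_def by blast
  have invariant: "b \<in> Vs \<and> (g a \<longleftrightarrow> g b)" if "R\<^sup>*\<^sup>* a b" "a \<in> Vs" for a b
    using that by (induction rule: rtranclp_induct) (use step in blast)+
  fix u assume "u \<in> Vs"
  show "reach R u \<in> ?W \<longleftrightarrow> g u"
  proof
    assume "reach R u \<in> ?W"
    then obtain w where "reach R u = reach R w" "w \<in> Vs" "g w" by blast
    moreover have "u \<in> reach R u" by (simp add: reach_def)
    ultimately show "g u" using invariant by (auto simp: reach_def)
  qed (use \<open>u \<in> Vs\<close> in blast)
qed

lemma mem_cut_of_ends:
  "endp S = {A, B} \<Longrightarrow> S \<in> cut Es endp X \<longleftrightarrow> S \<in> Es \<and> ((A \<in> X) \<noteq> (B \<in> X))"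
  by (auto simp: cut_def)

lemma square_ends_of_pairs:
  assumes "S = {a, a', b, b'}" "\<forall>u\<in>S. \<exists>y\<in>S. P u y"
    and "reach R a' = reach R a" "reach R b' = reach R b"
  shows "square_ends R P S = {reach R a, reach R b}"
proof -
  have "square_ends R P S = reach R ` S"
    using assms(2) unfolding square_ends_def by blast
  then show ?thesis using assms(1,3,4) by auto
qed

definition mate :: "('e \<Rightarrow> 'v set) \<Rightarrow> 'e set \<Rightarrow> 'v \<Rightarrow> 'v" where
  "mate ends m x = (THE y. adj ends m x y)"

locale multigraph =
  fixes Vs :: "'v set" and Es :: "'e set" and ends :: "'e \<Rightarrow> 'v set"
  assumes ends_subset: "e \<in> Es \<Longrightarrow> ends e \<subseteq> Vs"
    and card_ends: "e \<in> Es \<Longrightarrow> card (ends e) = 2"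
begin

lemma adj_endpoints:
  assumes "m \<subseteq> Es" "adj ends m x y"
  shows "x \<in> Vs \<and> y \<in> Vs \<and> x \<noteq> y"
proof -
  obtain e where e: "e \<in> Es" "ends e = {x, y}" using assms by (auto simp: adj_def)
  then show ?thesis using ends_subset[OF e(1)] card_ends[OF e(1)] by (cases "x = y") auto
qed

lemma perfect_matching_ex1_adj:
  assumes "perfect_matching Vs Es ends m" "x \<in> Vs"
  shows "\<exists>!y. adj ends m x y"
proof -
  have "card {e\<in>m. x \<in> ends e} = 1" using assms by (simp add: perfect_matching_def)
  then obtain e where e: "{e\<in>m. x \<in> ends e} = {e}" by (rule card_1_singletonE)
  then have "e \<in> Es" using assms(1) by (auto simp: perfect_matching_def)
  moreover have "x \<in> ends e" using e by blast
  ultimately obtain y where y: "ends e = {x, y}" "x \<noteq> y"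
    using card_ends[of e] unfolding card_2_iff by (metis insert_commute insertE singletonD)
  show ?thesis
  proof
    show "adj ends m x y" using e y by (auto simp: adj_def)
  next
    fix y' assume "adj ends m x y'"
    then obtain e' where "e' \<in> m" "ends e' = {x, y'}" by (auto simp: adj_def)
    then have "e' = e" using e by blast
    then show "y' = y" using \<open>ends e' = {x, y'}\<close> y by (auto simp: doubleton_eq_iff)
  qed
qed

context
  fixes m assumes pm: "perfect_matching Vs Es ends m"
begin

lemma adj_mate: "x \<in> Vs \<Longrightarrow> adj ends m x (mate ends m x)"
  unfolding mate_def by (rule theI'[OF perfect_matching_ex1_adj[OF pm]])

lemma mate_eq: "x \<in> Vs \<Longrightarrow> adj ends m x y \<Longrightarrow> mate ends m x = y"
  unfolding mate_def by (rule the1_equality[OF perfect_matching_ex1_adj[OF pm]])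

lemma mate_in_Vs_neq:
  assumes "x \<in> Vs" shows "mate ends m x \<in> Vs" "mate ends m x \<noteq> x"
  using adj_endpoints[OF _ adj_mate[OF assms]] pm by (auto simp: perfect_matching_def)

lemma mate_mate: "x \<in> Vs \<Longrightarrow> mate ends m (mate ends m x) = x"
  using mate_eq mate_in_Vs_neq(1) adj_mate symp_adj by (metis sympD)

end

end

locale cubic_map =
  fixes Vs :: "'v set" and Es :: "'e set" and ends :: "'e \<Rightarrow> 'v set" and v f :: "'e set"
  assumes map: "is_map Vs Es ends v f"

sublocale cubic_map \<subseteq> multigraph
  using map by unfold_locales (auto simp: is_map_def cubic_multigraph_def)

context cubic_map
begin

abbreviation "vmate \<equiv> mate ends v"
abbreviation "fmate \<equiv> mate ends f"
abbreviation "square_of x \<equiv> reach (adj ends (v \<union> f)) x"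

lemma pm_v: "perfect_matching Vs Es ends v" and pm_f: "perfect_matching Vs Es ends f"
  using map by (simp_all add: is_map_def)

lemma finite_Vs: "finite Vs"
  using map by (simp add: is_map_def cubic_multigraph_def)

lemmas adj_vmate = adj_mate[OF pm_v] and adj_fmate = adj_mate[OF pm_f]
lemmas vmate_in_Vs_neq = mate_in_Vs_neq[OF pm_v] and fmate_in_Vs_neq = mate_in_Vs_neq[OF pm_f]
lemmas vmate_vmate = mate_mate[OF pm_v] and fmate_fmate = mate_mate[OF pm_f]

lemma adj_v_Un_f_iff:
  "x \<in> Vs \<Longrightarrow> adj ends (v \<union> f) x y \<longleftrightarrow> y = vmate x \<or> y = fmate x"
  using adj_Un adj_vmate adj_fmate mate_eq[OF pm_v] mate_eq[OF pm_f] by metis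

lemma square_of_subset:
  assumes "x \<in> C" "\<forall>y\<in>C. y \<in> Vs \<and> vmate y \<in> C \<and> fmate y \<in> C"
  shows "square_of x \<subseteq> C"
proof
  fix y assume "y \<in> square_of x"
  then have "(adj ends (v \<union> f))\<^sup>*\<^sup>* x y" by (simp add: reach_def)
  then show "y \<in> C"
    by (induction rule: rtranclp_induct) (use assms adj_v_Un_f_iff in auto)
qed

lemma square_of_subset_Vs: "x \<in> Vs \<Longrightarrow> square_of x \<subseteq> Vs"
  by (rule square_of_subset) (auto simp: vmate_in_Vs_neq fmate_in_Vs_neq)

lemma square_of_eq_if_mem: "y \<in> square_of x \<Longrightarrow> square_of y = square_of x"
  by (rule reach_eq_if_rtranclp[OF symp_adj, symmetric]) (simp add: reach_def)

lemma vmate_fmate_mem_square_of: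
  assumes "x \<in> Vs" "y \<in> square_of x"
  shows "vmate y \<in> square_of x" "fmate y \<in> square_of x"
proof -
  have "y \<in> Vs" using assms square_of_subset_Vs by blast
  then have "adj ends (v \<union> f) y (vmate y)" "adj ends (v \<union> f) y (fmate y)"
    using adj_v_Un_f_iff by blast+
  then show "vmate y \<in> square_of x" "fmate y \<in> square_of x"
    using assms(2) by (auto simp: reach_def intro: rtranclp.rtrancl_into_rtrancl)
qed

lemma mem_square_of_self: "x \<in> square_of x"
  by (simp add: reach_def)

lemma card_square_of: "x \<in> Vs \<Longrightarrow> card (square_of x) = 4"
  using map by (auto simp: is_map_def comps_def)

lemma vmate_neq_fmate:
  assumes x: "x \<in> Vs" shows "vmate x \<noteq> fmate x"
proof
  assume eq: "vmate x = fmate x"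
  have "vmate x \<in> Vs" "vmate (vmate x) = x" "fmate (vmate x) = x"
    using x eq vmate_in_Vs_neq vmate_vmate fmate_fmate by metis+
  then have "square_of x \<subseteq> {x, vmate x}"
    by (intro square_of_subset) (use x eq in auto)
  then have "card (square_of x) \<le> card {x, vmate x}" by (simp add: card_mono)
  also have "\<dots> \<le> 2" by (simp add: card_insert_if)
  finally show False using card_square_of[OF x] by simp
qed

lemma square_of_eq:
  assumes x: "x \<in> Vs"
  shows "square_of x = {x, vmate x, fmate x, fmate (vmate x)}"
    and "distinct [x, vmate x, fmate x, fmate (vmate x)]"
    and "vmate (fmate x) = fmate (vmate x)"
proof -
  have Vs: "vmate x \<in> Vs" "fmate x \<in> Vs" using x vmate_in_Vs_neq fmate_in_Vs_neq by blast+
  show dist: "distinct [x, vmate x, fmate x, fmate (vmate x)]"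
    using vmate_neq_fmate[OF x] vmate_in_Vs_neq(2)[OF x] fmate_in_Vs_neq(2)[OF x]
      fmate_in_Vs_neq(2)[OF Vs(1)] fmate_fmate[OF x] fmate_fmate[OF Vs(1)]
    by auto
  have sub: "{x, vmate x, fmate x, fmate (vmate x)} \<subseteq> square_of x"
    using mem_square_of_self vmate_fmate_mem_square_of x by blast
  have "card {x, vmate x, fmate x, fmate (vmate x)} = 4"
    using distinct_card[OF dist] by simp
  then show sq: "square_of x = {x, vmate x, fmate x, fmate (vmate x)}"
    using card_seteq[OF finite_subset[OF square_of_subset_Vs[OF x] finite_Vs] sub]
      card_square_of[OF x] by simp
  have "vmate (fmate x) \<in> square_of x"
    using vmate_fmate_mem_square_of x mem_square_of_self by blast
  moreover have "vmate (fmate x) \<noteq> x" "vmate (fmate x) \<noteq> vmate x"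
    using vmate_vmate[OF Vs(2)] vmate_vmate[OF x] vmate_neq_fmate[OF x] fmate_in_Vs_neq(2)[OF x]
    by metis+
  moreover have "vmate (fmate x) \<noteq> fmate x" using vmate_in_Vs_neq(2)[OF Vs(2)] .
  ultimately show "vmate (fmate x) = fmate (vmate x)" using sq by blast
qed

lemma squares_eq: "squares Vs ends v f = square_of ` Vs"
  by (auto simp: squares_def comps_def)

lemma diag_iff:
  assumes x: "x \<in> Vs" shows "diag Vs ends v f x u \<longleftrightarrow> u = fmate (vmate x)"
proof -
  have "(\<exists>S\<in>squares Vs ends v f. x \<in> S \<and> u \<in> S) \<longleftrightarrow> u \<in> square_of x"
    using square_of_eq_if_mem x mem_square_of_self by (auto simp: squares_eq) metis
  then show ?thesis
    using square_of_eq[OF x] adj_v_Un_f_iff[OF x] by (auto simp: diag_def)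
qed

lemma symp_diag: "symp (diag Vs ends v f)"
  using sympD[OF symp_adj[where ends=ends and F="v \<union> f"]] unfolding symp_def diag_def by blast

text \<open>The components of RV, RF and RZ are the vertices of G_M, G_D and G_P.\<close>

abbreviation "RV \<equiv> adj ends (v \<union> a_edges Es v f)"
abbreviation "RF \<equiv> adj ends (f \<union> a_edges Es v f)"
abbreviation "RZ \<equiv> \<lambda>x y. diag Vs ends v f x y \<or> adj ends (a_edges Es v f) x y"

lemma reach_RV_vmate:
  assumes "x \<in> Vs" shows "reach RV (vmate x) = reach RV x"
proof -
  have "RV x (vmate x)" using adj_vmate[OF assms] by (simp add: adj_Un)
  then show ?thesis by (rule reach_eq_if_step[OF symp_adj, symmetric])
qed

lemma reach_RF_fmate:
  assumes "x \<in> Vs" shows "reach RF (fmate x) = reach RF x"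
proof -
  have "RF x (fmate x)" using adj_fmate[OF assms] by (simp add: adj_Un)
  then show ?thesis by (rule reach_eq_if_step[OF symp_adj, symmetric])
qed

lemma symp_RZ: "symp RZ"
proof (rule sympI)
  fix x y assume "RZ x y"
  then show "RZ y x"
    using sympD[OF symp_diag, of x y] sympD[OF symp_adj, where x=x and y=y] by blast
qed

lemma reach_RZ_diag:
  assumes "x \<in> Vs" shows "reach RZ (fmate (vmate x)) = reach RZ x"
proof -
  have "RZ x (fmate (vmate x))" using diag_iff[OF assms] by simp
  then show ?thesis by (rule reach_eq_if_step[OF symp_RZ, symmetric])
qed

lemma RZ_cases:
  assumes "x \<in> Vs" "RZ x y"
  obtains "y = fmate (vmate x)"
    | "y \<in> Vs" "reach RV y = reach RV x" "reach RF y = reach RF x"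
proof (cases "diag Vs ends v f x y")
  case True then show ?thesis using that(1) diag_iff assms(1) by blast
next
  case False
  then have a: "adj ends (a_edges Es v f) x y" using assms(2) by blast
  have "RV x y" "RF x y" using a by (simp_all add: adj_Un)
  then have "reach RV y = reach RV x" "reach RF y = reach RF x"
    by (simp_all add: reach_eq_if_step[OF symp_adj])
  moreover have "y \<in> Vs" using a adj_endpoints[of "a_edges Es v f"] by (auto simp: a_edges_def)
  ultimately show ?thesis using that(2) by blast
qed

lemma square_ends_V:
  assumes x: "x \<in> Vs"
  shows "square_ends RV (adj ends v) (square_of x) = {reach RV x, reach RV (fmate x)}"
proof (rule square_ends_of_pairs)
  show "square_of x = {x, vmate x, fmate x, vmate (fmate x)}" using square_of_eq[OF x] by simp
  show "\<forall>u\<in>square_of x. \<exists>y\<in>square_of x. adj ends v u y"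
    using adj_vmate vmate_fmate_mem_square_of[OF x] square_of_subset_Vs[OF x] by blast
  show "reach RV (vmate x) = reach RV x" "reach RV (vmate (fmate x)) = reach RV (fmate x)"
    using reach_RV_vmate x fmate_in_Vs_neq(1) by blast+
qed

lemma square_ends_F:
  assumes x: "x \<in> Vs"
  shows "square_ends RF (adj ends f) (square_of x) = {reach RF x, reach RF (vmate x)}"
proof (rule square_ends_of_pairs)
  show "square_of x = {x, fmate x, vmate x, fmate (vmate x)}" using square_of_eq[OF x] by auto
  show "\<forall>u\<in>square_of x. \<exists>y\<in>square_of x. adj ends f u y"
    using adj_fmate vmate_fmate_mem_square_of[OF x] square_of_subset_Vs[OF x] by blast
  show "reach RF (fmate x) = reach RF x" "reach RF (fmate (vmate x)) = reach RF (vmate x)"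
    using reach_RF_fmate x vmate_in_Vs_neq(1) by blast+
qed

lemma square_ends_Z:
  assumes x: "x \<in> Vs"
  shows "square_ends RZ (diag Vs ends v f) (square_of x) = {reach RZ x, reach RZ (vmate x)}"
proof (rule square_ends_of_pairs)
  show "square_of x = {x, fmate (vmate x), vmate x, fmate (vmate (vmate x))}"
    using square_of_eq[OF x] vmate_vmate[OF x] by auto
  show "\<forall>u\<in>square_of x. \<exists>y\<in>square_of x. diag Vs ends v f u y"
    using diag_iff vmate_fmate_mem_square_of[OF x] square_of_subset_Vs[OF x] by blast
  show "reach RZ (fmate (vmate x)) = reach RZ x"
    "reach RZ (fmate (vmate (vmate x))) = reach RZ (vmate x)"
    using reach_RZ_diag x vmate_in_Vs_neq(1) by blast+
qed

lemma G_cut_space_squares_iff: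
  assumes ends: "\<And>x. x \<in> Vs \<Longrightarrow> square_ends R P (square_of x) = {reach R x, reach R (q x)}"
  shows "T \<in> G_cut_space Vs (squares Vs ends v f) R P \<longleftrightarrow> T \<subseteq> squares Vs ends v f \<and>
    (\<exists>X \<subseteq> comps Vs R. \<forall>x\<in>Vs. square_of x \<in> T \<longleftrightarrow> (reach R x \<in> X) \<noteq> (reach R (q x) \<in> X))"
proof -
  have mem_cut: "square_of x \<in> cut (squares Vs ends v f) (square_ends R P) X \<longleftrightarrow>
      (reach R x \<in> X) \<noteq> (reach R (q x) \<in> X)" if "x \<in> Vs" for x X
    using mem_cut_of_ends[where endp = "square_ends R P", OF ends[OF that]] that
    by (simp add: squares_eq)
  have eq: "T = cut (squares Vs ends v f) (square_ends R P) X \<longleftrightarrow> T \<subseteq> squares Vs ends v f \<and>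
    (\<forall>x\<in>Vs. square_of x \<in> T \<longleftrightarrow> (reach R x \<in> X) \<noteq> (reach R (q x) \<in> X))" for X
  proof -
    have "cut (squares Vs ends v f) (square_ends R P) X \<subseteq> squares Vs ends v f"
      by (auto simp: cut_def)
    then have "T = cut (squares Vs ends v f) (square_ends R P) X \<longleftrightarrow> T \<subseteq> squares Vs ends v f \<and>
      (\<forall>S\<in>squares Vs ends v f. S \<in> T \<longleftrightarrow> S \<in> cut (squares Vs ends v f) (square_ends R P) X)"
      by blast
    then show ?thesis using mem_cut by (simp add: squares_eq)
  qed
  show ?thesis unfolding G_cut_space_def cut_space_def mem_Collect_eq eq by blast
qed

lemma V_space_iff: "T \<in> V_space Vs Es ends v f \<longleftrightarrow> T \<subseteq> squares Vs ends v f \<and>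
    (\<exists>X \<subseteq> comps Vs RV. \<forall>x\<in>Vs. square_of x \<in> T \<longleftrightarrow> (reach RV x \<in> X) \<noteq> (reach RV (fmate x) \<in> X))"
  unfolding V_space_def by (rule G_cut_space_squares_iff[OF square_ends_V])

lemma F_space_iff: "T \<in> F_space Vs Es ends v f \<longleftrightarrow> T \<subseteq> squares Vs ends v f \<and>
    (\<exists>Y \<subseteq> comps Vs RF. \<forall>x\<in>Vs. square_of x \<in> T \<longleftrightarrow> (reach RF x \<in> Y) \<noteq> (reach RF (vmate x) \<in> Y))"
  unfolding F_space_def by (rule G_cut_space_squares_iff[OF square_ends_F])

lemma Z_space_iff: "T \<in> Z_space Vs Es ends v f \<longleftrightarrow> T \<subseteq> squares Vs ends v f \<and>
    (\<exists>W \<subseteq> comps Vs RZ. \<forall>x\<in>Vs. square_of x \<in> T \<longleftrightarrow> (reach RZ x \<in> W) \<noteq> (reach RZ (vmate x) \<in> W))"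
  unfolding Z_space_def by (rule G_cut_space_squares_iff[OF square_ends_Z])

lemma parity_invariant_RZ:
  assumes X: "\<forall>x\<in>Vs. square_of x \<in> T \<longleftrightarrow> (reach RV x \<in> X) \<noteq> (reach RV (fmate x) \<in> X)"
    and Y: "\<forall>x\<in>Vs. square_of x \<in> T \<longleftrightarrow> (reach RF x \<in> Y) \<noteq> (reach RF (vmate x) \<in> Y)"
    and "a \<in> Vs" "RZ a b"
  shows "b \<in> Vs \<and>
    ((reach RV a \<in> X) \<noteq> (reach RF a \<in> Y) \<longleftrightarrow> (reach RV b \<in> X) \<noteq> (reach RF b \<in> Y))"
  using \<open>a \<in> Vs\<close> \<open>RZ a b\<close>
proof (cases rule: RZ_cases)
  case 1
  note a = \<open>a \<in> Vs\<close>
  have "b \<in> Vs" using 1 a fmate_in_Vs_neq vmate_in_Vs_neq by simp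
  moreover have "reach RV b = reach RV (fmate a)"
    using 1 square_of_eq(3)[OF a] reach_RV_vmate fmate_in_Vs_neq(1)[OF a] by metis
  moreover have "reach RF b = reach RF (vmate a)"
    using 1 reach_RF_fmate vmate_in_Vs_neq(1)[OF a] by simp
  ultimately show ?thesis using X Y a by auto
qed simp

end

theorem theorem2p5:
  fixes Vs :: "'v set" and Es :: "'e set" and ends :: "'e \<Rightarrow> 'v set" and v f :: "'e set"
  assumes "is_map Vs Es ends v f"
  shows "V_space Vs Es ends v f \<inter> F_space Vs Es ends v f \<subseteq> Z_space Vs Es ends v f"
proof
  interpret cubic_map Vs Es ends v f by unfold_locales (rule assms)
  fix T assume "T \<in> V_space Vs Es ends v f \<inter> F_space Vs Es ends v f"
  then have "T \<in> V_space Vs Es ends v f" "T \<in> F_space Vs Es ends v f" by blast+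
  then obtain X Y where T: "T \<subseteq> squares Vs ends v f"
    and X: "\<forall>x\<in>Vs. square_of x \<in> T \<longleftrightarrow> (reach RV x \<in> X) \<noteq> (reach RV (fmate x) \<in> X)"
    and Y: "\<forall>x\<in>Vs. square_of x \<in> T \<longleftrightarrow> (reach RF x \<in> Y) \<noteq> (reach RF (vmate x) \<in> Y)"
    unfolding V_space_iff F_space_iff by blast
  define g where "g u \<longleftrightarrow> (reach RV u \<in> X) \<noteq> (reach RF u \<in> Y)" for u
  obtain W where W: "W \<subseteq> comps Vs RZ" and g: "\<And>u. u \<in> Vs \<Longrightarrow> reach RZ u \<in> W \<longleftrightarrow> g u"
    using comps_subset_of_invariant[of Vs RZ g] parity_invariant_RZ[OF X Y] unfolding g_def by blast
  have "\<forall>x\<in>Vs. square_of x \<in> T \<longleftrightarrow> (reach RZ x \<in> W) \<noteq> (reach RZ (vmate x) \<in> W)"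
    using Y g reach_RV_vmate vmate_in_Vs_neq(1) unfolding g_def by auto
  then show "T \<in> Z_space Vs Es ends v f" unfolding Z_space_iff using T W by blast
qed

end
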